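(* Let $\widehat V=\widehat S+\widehat F\in\mathrm{End}(\mathbb R^n)$ with $\widehat S^\top=\widehat S$, $\widehat F^\top=-\widehat F$, and let $H(\tilde\rho,y)=\tfrac12\|y\|^2+\langle y,\widehat V\tilde\rho\rangle$ on $N=\mathbb R^{2n}$ with symplectic form $\Omega=d\tilde\rho^i\wedge dy_i$, extended holomorphically (bilinearly) to $N_{\mathbb C}\simeq\mathbb C^{2n}$, with complex Hamiltonian vector field $X_H(\tilde\rho,y)=(a,b)=(y+\widehat V\tilde\rho,\,-\widehat V^\top y)$. Let $M_\ast=(1-i)I$ (so $\mathrm{Im}\,M_\ast=-I$), and let $\Pi^{(+)}_{M_\ast}$ be the projector of $\mathbb C^n\oplus\mathbb C^n$ onto $L^{(+)}=\{(u,M_\ast u)\}$ along $L^{(-)}=\{(u,\bar M_\ast u)\}$, explicitly $\Pi^{(+)}_{M_\ast}(a,b)=(u,M_\ast u)$ with $u=(2i\,\mathrm{Im}\,M_\ast)^{-1}(b-\bar M_\ast a)$. Consider the projected dynamics $\dot z=\Pi^{(+)}_{M_\ast}X_H(z)$ for $z=(\tilde\rho,y)\in\mathbb C^{2n}$, and set $\psi=(1-i)\tilde\rho+iy$, $\phi=(1+i)\tilde\rho-iy$. Then each affine leaf $\{\phi=\phi_0\}$ is invariant under this dynamics (in particular $\{\phi=0\}$ is invariant), and on $\{\phi=0\}$ one has $i\dot\psi=(I+\widehat S+i\widehat F)\psi$. Equivalently, $\Psi(t):=e^{it}\psi(t)$ satisfies $i\dot\Psi=(\widehat S+i\widehat 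F)\Psi$.
   Context: $\langle\cdot,\cdot\rangle$, $\|\cdot\|$ denote the Euclidean inner product/norm, extended complex-bilinearly where needed. *)

theory Defs
  imports "HOL-Analysis.Analysis"
begin

text \<open>Holomorphic (complex-bilinear) extension of a real matrix to complex vectors:
  entrywise inclusion of the real matrix into the complex matrices.\<close>
definition cmat :: "real^'n^'m \<Rightarrow> complex^'n^'m" where
  "cmat A = (\<chi> i j. complex_of_real (A $ i $ j))"

definition conj_mat :: "complex^'n^'m \<Rightarrow> complex^'n^'m" where
  "conj_mat M = (\<chi> i j. cnj (M $ i $ j))"

definition Im_mat :: "complex^'n^'m \<Rightarrow> real^'n^'m" where
  "Im_mat M = (\<chi> i j. Im (M $ i $ j))"

definition XH :: "real^'n^'n \<Rightarrow> (complex^'n) \<times> (complex^'n) \<Rightarrow> (complex^'n) \<times> (complex^'n)" where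
  "XH V z = (snd z + cmat V *v fst z, - (cmat (transpose V) *v snd z))"

definition Pi_plus :: "complex^'n^'n \<Rightarrow> (complex^'n) \<times> (complex^'n) \<Rightarrow> (complex^'n) \<times> (complex^'n)" where
  "Pi_plus M ab =
     (let u = matrix_inv ((\<chi> i j. 2 * \<i> * complex_of_real (Im_mat M $ i $ j)))
              *v (snd ab - conj_mat M *v fst ab)
      in (u, M *v u))"

definition Mstar :: "complex^'n^'n" where
  "Mstar = mat (1 - \<i>)"

definition psi_of :: "(complex^'n) \<times> (complex^'n) \<Rightarrow> complex^'n" where
  "psi_of z = (1 - \<i>) *s fst z + \<i> *s snd z"

definition phi_of :: "(complex^'n) \<times> (complex^'n) \<Rightarrow> complex^'n" where
  "phi_of z = (1 + \<i>) *s fst z - \<i> *s snd z"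

end

theory Submission imports Defs begin

text \<open>For \<open>M = (1 - \<i>) I\<close> the subspace \<open>L\<^sup>+ = {(u, (1 - \<i>) u)}\<close> is exactly the kernel of
  \<open>\<phi>\<close>, so the projected velocity never changes \<open>\<phi>\<close>. On \<open>{\<phi> = 0}\<close> one has
  \<open>y = (1 - \<i>) \<rho>\<close> and \<open>\<psi> = 2 \<rho>\<close>; using \<open>V\<^sup>T = S - F\<close>, the \<open>\<psi>\<close>-component of the
  projected field \<open>\<i> (b - (1 + \<i>) a)\<close> becomes \<open>-\<i> (I + S + \<i> F) \<psi>\<close>. Multiplying by the
  phase \<open>e\<^sup>i\<^sup>t\<close> removes the identity term.\<close>

lemma matrix_vector_mult_mat: "mat c *v x = c *s (x :: 'a::semiring_1^'n)"
  by (simp add: vec_eq_iff matrix_vector_mult_def mat_def if_distrib[of "\<lambda>u. u * _"] cong: if_cong)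

lemma mat_mult_mat: "mat a ** mat b = (mat (a * b) :: 'a::semiring_1^'n^'n)"
  by (simp add: vec_eq_iff matrix_matrix_mult_def mat_def if_distrib[of "\<lambda>u. u * _"] cong: if_cong)

lemma matrix_inv_unique:
  fixes A B :: "'a::semiring_1^'n^'n"
  assumes "A ** B = mat 1" and "B ** A = mat 1"
  shows "matrix_inv A = B"
proof -
  have "A ** matrix_inv A = mat 1"
    unfolding matrix_inv_def by (rule someI2[of _ B]) (use assms in auto)
  then have "B ** (A ** matrix_inv A) = B"
    by simp
  then show ?thesis
    by (simp add: matrix_mul_assoc assms(2))
qed

lemma matrix_inv_mat:
  assumes "c \<noteq> 0"
  shows "matrix_inv (mat c :: 'a::field^'n^'n) = mat (inverse c)"
  using assms by (intro matrix_inv_unique) (simp_all add: mat_mult_mat)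

lemma cmat_add: "cmat (A + B) = cmat A + cmat B"
  by (simp add: vec_eq_iff cmat_def)

lemma cmat_diff: "cmat (A - B) = cmat A - cmat B"
  by (simp add: vec_eq_iff cmat_def)

lemma transpose_add: "transpose (A + B) = transpose A + transpose B"
  by (simp add: vec_eq_iff transpose_def)

lemma Pi_plus_Mstar:
  "Pi_plus Mstar (a, b) = (let u = (\<i> / 2) *s (b - (1 + \<i>) *s a) in (u, (1 - \<i>) *s u))"
proof -
  have two_i_Im:
    "(\<chi> i j. 2 * \<i> * complex_of_real (Im_mat Mstar $ i $ j)) = (mat (-2 * \<i>) :: complex^'n^'n)"
    by (simp add: vec_eq_iff Mstar_def Im_mat_def mat_def)
  have "inverse (-2 * \<i>) = \<i> / 2"
    by (simp add: field_simps)
  then have inv: "matrix_inv (mat (-2 * \<i>) :: complex^'n^'n) = mat (\<i> / 2)"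
    using matrix_inv_mat[of "-2 * \<i>"] by simp
  have conj: "conj_mat Mstar = (mat (1 + \<i>) :: complex^'n^'n)"
    by (simp add: vec_eq_iff Mstar_def conj_mat_def mat_def)
  show ?thesis
    unfolding Pi_plus_def two_i_Im inv conj by (simp add: Mstar_def matrix_vector_mult_mat)
qed

lemma phi_of_Pi_plus_Mstar: "phi_of (Pi_plus Mstar ab) = 0"
  by (cases ab) (simp add: Pi_plus_Mstar phi_of_def vec_eq_iff field_simps)

lemma psi_of_Pi_plus_Mstar: "psi_of (Pi_plus Mstar (a, b)) = \<i> *s (b - (1 + \<i>) *s a)"
  by (simp add: Pi_plus_Mstar psi_of_def vec_eq_iff field_simps)

lemma bounded_linear_lincomb_fst_snd:
  "bounded_linear (\<lambda>z :: (complex^'n) \<times> (complex^'n). c *s fst z + d *s snd z)"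
proof -
  have "linear (\<lambda>z :: (complex^'n) \<times> (complex^'n). c *s fst z + d *s snd z)"
    by (rule linearI) (simp_all add: vec_eq_iff algebra_simps)
  then show ?thesis
    by (simp add: linear_conv_bounded_linear)
qed

lemma bounded_bilinear_vector_scalar_mult:
  "bounded_bilinear (\<lambda>(c::complex) (x::complex^'n). c *s x)"
  by (rule bilinear_conv_bounded_bilinear[THEN iffD1])
    (auto simp: bilinear_def intro!: linearI simp: vec_eq_iff algebra_simps)

lemma has_vector_derivative_phi_of:
  "(z has_vector_derivative d) F \<Longrightarrow> ((\<lambda>s. phi_of (z s)) has_vector_derivative phi_of d) F"
  using bounded_linear.has_vector_derivative[OF bounded_linear_lincomb_fst_snd[of "1 + \<i>" "-\<i>"]]
  by (simp add: phi_of_def vector_smult_lneg)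

lemma has_vector_derivative_psi_of:
  "(z has_vector_derivative d) F \<Longrightarrow> ((\<lambda>s. psi_of (z s)) has_vector_derivative psi_of d) F"
  using bounded_linear.has_vector_derivative[OF bounded_linear_lincomb_fst_snd[of "1 - \<i>" "\<i>"]]
  by (simp add: psi_of_def)

lemma psi_of_projected_field:
  fixes S F V :: "real^'n^'n"
  assumes "transpose S = S" and "transpose F = - F" and "V = S + F"
    and "phi_of (\<rho>, y) = 0"
  shows "\<i> *s psi_of (Pi_plus Mstar (XH V (\<rho>, y)))
    = (mat 1 + cmat S + mat \<i> ** cmat F) *v psi_of (\<rho>, y)"
proof -
  have y: "y = (1 - \<i>) *s \<rho>"
  proof -
    have "\<i> *s y = (1 + \<i>) *s \<rho>"
      using assms(4) by (simp add: phi_of_def)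
    then have "(-\<i>) *s (\<i> *s y) = (-\<i>) *s ((1 + \<i>) *s \<rho>)"
      by simp
    then show ?thesis
      by (simp add: vec_eq_iff field_simps)
  qed
  have psi: "psi_of (\<rho>, y) = 2 *s \<rho>"
    by (simp add: y psi_of_def vec_eq_iff field_simps)
  have V_transpose: "transpose V = S - F"
    using assms(1-3) by (simp add: transpose_add)
  have V_cmat: "cmat V = cmat S + cmat F"
    by (simp add: assms(3) cmat_add)
  have "\<i> *s psi_of (Pi_plus Mstar (XH V (\<rho>, y)))
      = (1 + \<i>) *s (y + (cmat S + cmat F) *v \<rho>) + (cmat S - cmat F) *v y"
    unfolding XH_def V_transpose V_cmat psi_of_Pi_plus_Mstar cmat_diff
    by (simp add: vec_eq_iff field_simps)
  also have "\<dots> = 2 *s (\<rho> + cmat S *v \<rho> + \<i> *s (cmat F *v \<rho>))"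
    by (simp add: y vector_scalar_commute matrix_vector_mult_add_rdistrib
        matrix_vector_mult_diff_rdistrib matrix_vector_mult_diff_distrib vec_eq_iff field_simps)
  also have "\<dots> = (mat 1 + cmat S + mat \<i> ** cmat F) *v psi_of (\<rho>, y)"
    unfolding psi
    by (simp add: vector_scalar_commute matrix_vector_mult_add_rdistrib
        matrix_vector_mul_assoc[symmetric] matrix_vector_mult_mat)
  finally show ?thesis .
qed

lemma has_vector_derivative_phase_shift:
  fixes f :: "real \<Rightarrow> complex^'n" and A :: "complex^'n^'n"
  assumes "(f has_vector_derivative w) (at t)" and "\<i> *s w = (mat 1 + A) *v f t"
  shows "\<exists>w'. ((\<lambda>s. exp (\<i> * complex_of_real s) *s f s) has_vector_derivative w') (at t)
    \<and> \<i> *s w' = A *v (exp (\<i> * complex_of_real t) *s f t)"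
proof -
  have "((\<lambda>s. exp (\<i> * complex_of_real s)) has_vector_derivative \<i> * exp (\<i> * complex_of_real t))
      (at t)"
    by (rule has_vector_derivative_real_field) (auto intro!: derivative_eq_intros)
  then have "((\<lambda>s. exp (\<i> * complex_of_real s) *s f s) has_vector_derivative
      exp (\<i> * complex_of_real t) *s w + (\<i> * exp (\<i> * complex_of_real t)) *s f t) (at t)"
    using assms(1) by (rule bounded_bilinear.has_vector_derivative[OF bounded_bilinear_vector_scalar_mult])
  moreover have "\<i> *s (E *s w + (\<i> * E) *s f t) = A *v (E *s f t)" for E
  proof -
    have "\<i> *s (E *s w + (\<i> * E) *s f t) = E *s (\<i> *s w) - E *s f t"
      by (simp add: vec_eq_iff algebra_simps)
    also have "\<dots> = E *s (A *v f t)"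
      by (simp add: assms(2) matrix_vector_mult_add_rdistrib)
    finally show ?thesis
      by (simp add: vector_scalar_commute)
  qed
  ultimately show ?thesis
    by blast
qed

theorem mainTheorem9:
  fixes S F V :: "real^'n^'n"
    and z :: "real \<Rightarrow> (complex^'n) \<times> (complex^'n)"
    and T :: "real set"
  assumes "transpose S = S" and "transpose F = - F" and "V = S + F"
    and "open T" and "is_interval T"
    and "\<And>t. t \<in> T \<Longrightarrow> (z has_vector_derivative Pi_plus Mstar (XH V (z t))) (at t)"
  shows "(\<forall>s\<in>T. \<forall>t\<in>T. phi_of (z s) = phi_of (z t))
    \<and> (\<forall>t\<in>T. phi_of (z t) = 0 \<longrightarrow>
          (\<exists>w. ((\<lambda>s. psi_of (z s)) has_vector_derivative w) (at t)
               \<and> \<i> *s w = (mat 1 + cmat S + mat \<i> ** cmat F) *v psi_of (z t))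
        \<and> (\<exists>w. ((\<lambda>s. exp (\<i> * complex_of_real s) *s psi_of (z s)) has_vector_derivative w) (at t)
               \<and> \<i> *s w = (cmat S + mat \<i> ** cmat F) *v (exp (\<i> * complex_of_real t) *s psi_of (z t))))"
proof (intro conjI ballI impI)
  have "((\<lambda>s. phi_of (z s)) has_vector_derivative 0) (at t within T)" if "t \<in> T" for t
    using has_vector_derivative_phi_of[OF assms(6)[OF that]]
    by (simp add: phi_of_Pi_plus_Mstar has_vector_derivative_at_within)
  then obtain c where "\<And>t. t \<in> T \<Longrightarrow> phi_of (z t) = c"
    using has_vector_derivative_zero_constant is_interval_convex[OF assms(5)] by metis
  then show "phi_of (z s) = phi_of (z t)" if "s \<in> T" and "t \<in> T" for s t
    using that by simp
next
  fix t assume "t \<in> T" and "phi_of (z t) = 0"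
  let ?w = "psi_of (Pi_plus Mstar (XH V (z t)))"
  have psi_deriv: "((\<lambda>s. psi_of (z s)) has_vector_derivative ?w) (at t)"
    using has_vector_derivative_psi_of[OF assms(6)[OF \<open>t \<in> T\<close>]] .
  moreover have psi_eq: "\<i> *s ?w = (mat 1 + cmat S + mat \<i> ** cmat F) *v psi_of (z t)"
    using psi_of_projected_field[OF assms(1-3), of "fst (z t)" "snd (z t)"] \<open>phi_of (z t) = 0\<close>
    by simp
  ultimately show "\<exists>w. ((\<lambda>s. psi_of (z s)) has_vector_derivative w) (at t)
      \<and> \<i> *s w = (mat 1 + cmat S + mat \<i> ** cmat F) *v psi_of (z t)"
    by blast
  show "\<exists>w. ((\<lambda>s. exp (\<i> * complex_of_real s) *s psi_of (z s)) has_vector_derivative w) (at t)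
      \<and> \<i> *s w = (cmat S + mat \<i> ** cmat F) *v (exp (\<i> * complex_of_real t) *s psi_of (z t))"
    using has_vector_derivative_phase_shift[OF psi_deriv] psi_eq by (simp add: add.assoc)
qed

end
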